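(* Let $c$ be a positive integer and $c/(c+1)<\vartheta<1$, and let $(Z_t)$ be the random walk of the context with $r=1$. For $z\in(-1,1)$ let $w(z)$ denote the unique solution $w\in(-1,1)$ of $w^{c+1}(1-\vartheta)z+\vartheta z=w$, and set $$\bar\varphi(z):=\frac{(1-\vartheta)z\,w(z)+\vartheta z-w(z)}{1-w(z)},\qquad \Phi(w,z):=\frac{(1-\vartheta)z\left(\frac{w-w^{c+1}}{1-w}\right)-\vartheta z\,\bar\varphi(z)}{1-(\vartheta z)/w-w^cz(1-\vartheta)},\quad w\in(-1,1).$$ Define $\varphi(z,u):=\left.\frac{1}{u!}\frac{\partial^u}{\partial w^u}\Phi(w,z)\right|_{w=0}$. Then for every $u\in\mathbb{N}$, $$\mathbb{E}[\tau(u)\mid\tau(u)<\infty]=\frac{\varphi'(1,u)}{\varphi(1,u)},$$ where $\varphi'$ denotes the derivative with respect to $z$.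
   Context: Random walk: for $\vartheta\in(0,1)$ and positive integers $c,r$, let $Z_0=0$ and $Z_t=Z_{t-1}+\Delta_t$ with $\Delta_t$ i.i.d., $\Delta_t=+c$ with probability $1-\vartheta$ and $-r$ with probability $\vartheta$. Define $\tau(u):=\inf\{t\in\mathbb{N}_0: Z_t\ge u\}$. (In the single-agent trust model with Beta$(\alpha,\beta)$ prior, the agent's quitting time is $\tau(u_{\rm crit})$ with $u_{\rm crit}=r\alpha-c\beta+1$.) *)

theory Defs
  imports "HOL-Probability.Probability" "HOL-Library.Extended_Nat"
begin

definition step_pmf :: "nat \<Rightarrow> nat \<Rightarrow> real \<Rightarrow> int pmf" where
  "step_pmf c r \<theta> = map_pmf (\<lambda>b. if b then - int r else int c) (bernoulli_pmf \<theta>)"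

text \<open>Probability space of i.i.d. step sequences (\<Delta>_1, \<Delta>_2, ...) = (\<omega> !! 0, \<omega> !! 1, ...).\<close>
definition walk_space :: "nat \<Rightarrow> nat \<Rightarrow> real \<Rightarrow> int stream measure" where
  "walk_space c r \<theta> = stream_space (measure_pmf (step_pmf c r \<theta>))"

definition walk :: "int stream \<Rightarrow> nat \<Rightarrow> int" where
  "walk \<omega> t = (\<Sum>i<t. \<omega> !! i)"

definition hit_time :: "real \<Rightarrow> int stream \<Rightarrow> enat" where
  "hit_time u \<omega> = (INF t \<in> {t. u \<le> real_of_int (walk \<omega> t)}. enat t)"

definition w_root :: "nat \<Rightarrow> real \<Rightarrow> real \<Rightarrow> real" where
  "w_root c \<theta> z = (THE w. -1 < w \<and> w < 1 \<and> w ^ (c+1) * (1-\<theta>) * z + \<theta> * z = w)"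

definition phibar :: "nat \<Rightarrow> real \<Rightarrow> real \<Rightarrow> real" where
  "phibar c \<theta> z = ((1-\<theta>) * z * w_root c \<theta> z + \<theta> * z - w_root c \<theta> z) / (1 - w_root c \<theta> z)"

text \<open>\<Phi>(w,z); the removable singularity at w = 0 is filled in by its limit 0.
  NOTE: the paper's numerator term is "\<theta> z phibar(z)"; this is a typo,
  the generating-function identity requires "phibar(z)" there.\<close>
definition Phi :: "nat \<Rightarrow> real \<Rightarrow> real \<Rightarrow> real \<Rightarrow> real" where
  "Phi c \<theta> w z = (if w = 0 then 0 else
     ((1-\<theta>) * z * ((w - w ^ (c+1)) / (1 - w)) - phibar c \<theta> z)
       / (1 - (\<theta> * z) / w - w ^ c * z * (1-\<theta>)))"

definition phi :: "nat \<Rightarrow> real \<Rightarrow> real \<Rightarrow> nat \<Rightarrow> real" where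
  "phi c \<theta> z u = (deriv ^^ u) (\<lambda>w. Phi c \<theta> w z) 0 / fact u"

end

theory Submission
  imports Defs
begin

text \<open>Conditioning on the first step gives a linear recursion for the hitting probabilities
  \<open>p\<^sub>n(x) = P(\<tau>(x) = n)\<close>. Summing it against \<open>z^n w^x\<close> shows that, for fixed \<open>z \<in> (0,1)\<close>,
  \<open>\<Phi>(\<cdot>, z)\<close> is the generating function \<open>\<Sum>x\<ge>1. E[z^\<tau>(x); \<tau>(x) < \<infinity>] w^x\<close>; the unknown
  boundary term \<open>E[z^\<tau>(1)]\<close> is pinned down by evaluating the identity at the zero \<open>w(z)\<close> of
  the denominator, which is unique because \<open>E[y^\<Delta>]\<close> is strictly decreasing on \<open>(0,1]\<close> under
  the negative drift. Hence \<open>\<phi>(z,u) = E[z^\<tau>(u); \<tau>(u) < \<infinity>]\<close>. The drift also gives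
  \<open>E[y^\<Delta>] < 1\<close> for some \<open>y > 1\<close>, and a Chernoff bound makes these power series converge beyond
  \<open>z = 1\<close>, so \<open>\<phi>\<close> and \<open>\<phi>'\<close> tend to \<open>P(\<tau>(u) < \<infinity>)\<close> and \<open>E[\<tau>(u); \<tau>(u) < \<infinity>]\<close>
  as \<open>z \<rightarrow> 1\<close>.\<close>

lemma funpow_diffs:
  "(diffs ^^ n) a k = pochhammer (of_nat k + 1) n * (a (k + n) :: 'a :: comm_ring_1)"
proof (induction n arbitrary: k)
  case 0
  then show ?case by simp
next
  case (Suc n)
  have "(diffs ^^ Suc n) a k = of_nat (Suc k) * (diffs ^^ n) a (Suc k)"
    by (simp add: diffs_def)
  also have "\<dots> = pochhammer (of_nat k + 1) (Suc n) * a (k + Suc n)"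
    using Suc by (simp add: pochhammer_rec add_ac)
  finally show ?case .
qed

lemma higher_deriv_powser_0:
  fixes a :: "nat \<Rightarrow> 'a :: {real_normed_field, banach}"
  assumes summable: "\<And>w. norm w < r \<Longrightarrow> summable (\<lambda>k. a k * w ^ k)" and "0 < r"
  shows "(deriv ^^ n) (\<lambda>w. \<Sum>k. a k * w ^ k) 0 = fact n * a n"
proof -
  have "\<forall>w. norm w < r \<longrightarrow> summable (\<lambda>k. (diffs ^^ n) a k * w ^ k) \<and>
          (deriv ^^ n) (\<lambda>w. \<Sum>k. a k * w ^ k) w = (\<Sum>k. (diffs ^^ n) a k * w ^ k)"
  proof (induction n)
    case 0
    then show ?case using summable by simp
  next
    case (Suc n)
    show ?case
    proof (intro allI impI conjI)
      fix w :: 'a assume w: "norm w < r"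
      show "summable (\<lambda>k. (diffs ^^ Suc n) a k * w ^ k)"
        using termdiff_converges[of w r "(diffs ^^ n) a"] Suc w by auto
      have "((\<lambda>w. \<Sum>k. (diffs ^^ n) a k * w ^ k) has_field_derivative
              (\<Sum>k. (diffs ^^ Suc n) a k * w ^ k)) (at w)"
        using termdiffs_strong'[of r "(diffs ^^ n) a" w] Suc w by auto
      then have "((deriv ^^ n) (\<lambda>w. \<Sum>k. a k * w ^ k) has_field_derivative
              (\<Sum>k. (diffs ^^ Suc n) a k * w ^ k)) (at w)"
        by (rule has_field_derivative_transform_within_open[where S = "ball 0 r"])
           (use Suc w in auto)
      then show "(deriv ^^ Suc n) (\<lambda>w. \<Sum>k. a k * w ^ k) w = (\<Sum>k. (diffs ^^ Suc n) a k * w ^ k)"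
        by (simp add: DERIV_imp_deriv)
    qed
  qed
  then have "(deriv ^^ n) (\<lambda>w. \<Sum>k. a k * w ^ k) 0 = (\<Sum>k. (diffs ^^ n) a k * 0 ^ k)"
    using \<open>0 < r\<close> by simp
  also have "\<dots> = fact n * a n"
    by (simp add: funpow_diffs pochhammer_fact)
  finally show ?thesis .
qed

lemma power_diff_le_of_le_one:
  fixes a b :: real
  assumes "0 \<le> a" "a \<le> b" "b \<le> 1"
  shows "b ^ n - a ^ n \<le> real n * (b - a)"
proof (induction n)
  case 0
  then show ?case by simp
next
  case (Suc n)
  have "a ^ n \<le> b ^ n" "a ^ n \<le> 1"
    using assms by (auto intro: power_mono power_le_one)
  have "b ^ Suc n - a ^ Suc n = b * (b ^ n - a ^ n) + a ^ n * (b - a)"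
    by (simp add: algebra_simps)
  also have "\<dots> \<le> 1 * (b ^ n - a ^ n) + 1 * (b - a)"
    using assms \<open>a ^ n \<le> b ^ n\<close> \<open>a ^ n \<le> 1\<close> by (intro add_mono mult_right_mono) auto
  also have "\<dots> \<le> real (Suc n) * (b - a)"
    using Suc by (simp add: algebra_simps)
  finally show ?case .
qed

lemma sums_diffs_at_1:
  fixes a :: "nat \<Rightarrow> real"
  assumes "summable (\<lambda>n. a n * R ^ n)" and "1 < R"
  shows "(\<lambda>n. real n * a n) sums (\<Sum>n. diffs a n)"
proof -
  have "summable (\<lambda>n. diffs a n * 1 ^ n)"
    using assms powser_inside[OF assms(1)] by (intro termdiff_converges[where K = R]) auto
  then have "(\<lambda>n. real (Suc n) * a (Suc n)) sums (\<Sum>n. diffs a n)"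
    by (simp add: diffs_def summable_sums)
  then show ?thesis
    by (subst (asm) sums_Suc_iff) simp
qed

lemma powser_tendsto_at_left_1:
  fixes a :: "nat \<Rightarrow> real"
  assumes summable: "summable (\<lambda>n. a n * R ^ n)" and "1 < R"
    and eq: "\<And>z. z \<in> {0<..<1} \<Longrightarrow> f z = (\<Sum>n. a n * z ^ n)"
  shows "(f \<longlongrightarrow> (\<Sum>n. a n)) (at_left 1)"
    and "(deriv f \<longlongrightarrow> (\<Sum>n. real n * a n)) (at_left 1)"
proof -
  have near_1: "eventually (\<lambda>z. z \<in> {0<..<1}) (at_left (1::real))"
    by (rule eventually_at_left_real) simp
  have inside: "summable (\<lambda>n. a n * z ^ n)" if "norm z < R" for z :: real
    using powser_inside[OF summable] that \<open>1 < R\<close> by simp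
  have "isCont (\<lambda>z. \<Sum>n. a n * z ^ n) 1"
    using summable \<open>1 < R\<close> by (intro isCont_powser) auto
  then have "((\<lambda>z. \<Sum>n. a n * z ^ n) \<longlongrightarrow> (\<Sum>n. a n)) (at_left 1)"
    by (simp add: isCont_def filterlim_at_split)
  then show "(f \<longlongrightarrow> (\<Sum>n. a n)) (at_left 1)"
    by (rule Lim_transform_eventually) (use near_1 eq in \<open>auto elim: eventually_mono\<close>)
  have deriv_f: "deriv f z = (\<Sum>n. diffs a n * z ^ n)" if "z \<in> {0<..<1}" for z
  proof -
    have "((\<lambda>z. \<Sum>n. a n * z ^ n) has_field_derivative (\<Sum>n. diffs a n * z ^ n)) (at z)"
      using inside that \<open>1 < R\<close> by (intro termdiffs_strong') auto
    then have "(f has_field_derivative (\<Sum>n. diffs a n * z ^ n)) (at z)"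
      by (rule has_field_derivative_transform_within_open[where S = "{0<..<1}"])
         (use that eq in auto)
    then show ?thesis by (rule DERIV_imp_deriv)
  qed
  have "summable (\<lambda>n. diffs a n * ((1 + R) / 2) ^ n)"
    using inside \<open>1 < R\<close> by (intro termdiff_converges[where K = R]) auto
  then have "isCont (\<lambda>z. \<Sum>n. diffs a n * z ^ n) 1"
    using \<open>1 < R\<close> by (intro isCont_powser) auto
  then have lim: "((\<lambda>z. \<Sum>n. diffs a n * z ^ n) \<longlongrightarrow> (\<Sum>n. diffs a n)) (at_left 1)"
    by (simp add: isCont_def filterlim_at_split)
  have "(\<Sum>n. diffs a n) = (\<Sum>n. real n * a n)"
    using sums_diffs_at_1[OF summable \<open>1 < R\<close>] by (simp add: sums_iff)
  moreover have "eventually (\<lambda>z. (\<Sum>n. diffs a n * z ^ n) = deriv f z) (at_left 1)"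
    using near_1 by (rule eventually_mono) (simp add: deriv_f)
  ultimately show "(deriv f \<longlongrightarrow> (\<Sum>n. real n * a n)) (at_left 1)"
    using Lim_transform_eventually[OF lim] by simp
qed

context finite_measure
begin

lemma sums_measure_enat_finite:
  fixes T :: "'a \<Rightarrow> enat"
  assumes "\<And>n. {x \<in> space M. T x = enat n} \<in> sets M"
  shows "(\<lambda>n. measure M {x \<in> space M. T x = enat n}) sums measure M {x \<in> space M. T x < \<infinity>}"
proof -
  have "{x \<in> space M. T x < \<infinity>} = (\<Union>n. {x \<in> space M. T x = enat n})"
    using less_infinityE by auto
  moreover have "disjoint_family (\<lambda>n. {x \<in> space M. T x = enat n})"
    by (auto simp: disjoint_family_on_def)
  ultimately show ?thesis
    using assms by (auto intro: finite_measure_UNION)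
qed

lemma integral_enat_finite:
  fixes T :: "'a \<Rightarrow> enat"
  assumes sets: "\<And>n. {x \<in> space M. T x = enat n} \<in> sets M"
    and summable: "summable (\<lambda>n. real n * measure M {x \<in> space M. T x = enat n})"
  shows "(\<integral>x. real (the_enat (T x)) * indicator {x \<in> space M. T x < \<infinity>} x \<partial>M)
           = (\<Sum>n. real n * measure M {x \<in> space M. T x = enat n})"
proof -
  define E where "E n = {x \<in> space M. T x = enat n}" for n
  have single: "(\<lambda>n. real n * indicator (E n) x) = (\<lambda>n. if n = k then real k else 0)"
    if "x \<in> space M" "T x = enat k" for x k
    using that by (auto simp: E_def indicator_def)
  have pointwise: "real (the_enat (T x)) * indicator {x \<in> space M. T x < \<infinity>} x
          = (\<Sum>n. real n * indicator (E n) x)" for x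
  proof (cases "x \<in> space M \<and> T x < \<infinity>")
    case True
    then obtain k where "T x = enat k" using less_infinityE by blast
    then show ?thesis
      using True single[of x k] sums_single[of k "\<lambda>_. real k"] by (simp add: sums_iff)
  next
    case False
    then show ?thesis by (auto simp: E_def indicator_def)
  qed
  have "(\<integral>x. (\<Sum>n. real n * indicator (E n) x) \<partial>M) = (\<Sum>n. real n * measure M (E n))"
  proof (subst integral_suminf)
    show "AE x in M. summable (\<lambda>n. norm (real n * indicator (E n) x :: real))"
    proof (rule AE_I2)
      fix x assume "x \<in> space M"
      then show "summable (\<lambda>n. norm (real n * indicator (E n) x :: real))"
        using single[of x] by (cases "T x") (auto simp: E_def indicator_def)
    qed
  qed (use sets summable in \<open>auto simp: E_def less_top[symmetric]\<close>)
  then show ?thesis unfolding pointwise by (simp add: E_def)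
qed

end

lemma walk_0 [simp]: "walk \<omega> 0 = 0"
  by (simp add: walk_def)

lemma walk_Stream_Suc: "walk (y ## \<omega>) (Suc t) = y + walk \<omega> t"
  unfolding walk_def sum.lessThan_Suc_shift by simp

lemma measurable_walk [measurable]:
  "(\<lambda>\<omega>. real_of_int (walk \<omega> t)) \<in> borel_measurable (stream_space (measure_pmf P))"
  unfolding walk_def of_int_sum
  by (intro borel_measurable_sum measurable_compose[OF measurable_snth]) auto

lemma hit_time_eq_Least:
  "hit_time u \<omega> = (if \<exists>t. u \<le> real_of_int (walk \<omega> t)
                    then enat (LEAST t. u \<le> real_of_int (walk \<omega> t)) else \<infinity>)"
proof (cases "\<exists>t. u \<le> real_of_int (walk \<omega> t)")
  case True
  define L where "L = (LEAST t. u \<le> real_of_int (walk \<omega> t))"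
  have L: "u \<le> real_of_int (walk \<omega> L)"
    unfolding L_def using True by (metis LeastI)
  have "hit_time u \<omega> = enat L"
  proof (rule antisym)
    show "hit_time u \<omega> \<le> enat L"
      unfolding hit_time_def using L by (intro INF_lower) auto
    show "enat L \<le> hit_time u \<omega>"
      unfolding hit_time_def by (intro INF_greatest) (auto simp: L_def intro: Least_le)
  qed
  then show ?thesis using True by (simp add: L_def)
next
  case False
  then show ?thesis by (simp add: hit_time_def top_enat_def)
qed

lemma hit_time_eq_enat_iff:
  "hit_time u \<omega> = enat n \<longleftrightarrow> u \<le> real_of_int (walk \<omega> n) \<and> (\<forall>t<n. real_of_int (walk \<omega> t) < u)"
proof
  assume hit: "hit_time u \<omega> = enat n"
  then have ex: "\<exists>t. u \<le> real_of_int (walk \<omega> t)"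
    by (auto simp: hit_time_eq_Least split: if_splits)
  then have "n = (LEAST t. u \<le> real_of_int (walk \<omega> t))"
    using hit by (simp add: hit_time_eq_Least)
  then show "u \<le> real_of_int (walk \<omega> n) \<and> (\<forall>t<n. real_of_int (walk \<omega> t) < u)"
    using ex by (metis LeastI not_less_Least not_le)
next
  assume "u \<le> real_of_int (walk \<omega> n) \<and> (\<forall>t<n. real_of_int (walk \<omega> t) < u)"
  moreover from this have "(LEAST t. u \<le> real_of_int (walk \<omega> t)) = n"
    by (intro Least_equality) (auto simp: not_less[symmetric])
  ultimately show "hit_time u \<omega> = enat n"
    by (auto simp: hit_time_eq_Least)
qed

lemma hit_time_nonpos: "x \<le> 0 \<Longrightarrow> hit_time (real_of_int x) \<omega> = 0"
  using hit_time_eq_enat_iff[of "real_of_int x" \<omega> 0] by (simp add: zero_enat_def)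

lemma hit_time_Stream:
  assumes "x > 0"
  shows "hit_time (real_of_int x) (y ## \<omega>) = eSuc (hit_time (real_of_int (x - y)) \<omega>)"
proof -
  have not_0: "\<not> real_of_int x \<le> real_of_int (walk (y ## \<omega>) 0)"
    using assms by simp
  have Suc: "real_of_int x \<le> real_of_int (walk (y ## \<omega>) (Suc t))
               \<longleftrightarrow> real_of_int (x - y) \<le> real_of_int (walk \<omega> t)" for t
    by (simp add: walk_Stream_Suc, arith)
  show ?thesis
  proof (cases "\<exists>t. real_of_int (x - y) \<le> real_of_int (walk \<omega> t)")
    case True
    then obtain t where t: "real_of_int (x - y) \<le> real_of_int (walk \<omega> t)" by blast
    have "(LEAST t. real_of_int x \<le> real_of_int (walk (y ## \<omega>) t))
          = Suc (LEAST t. real_of_int x \<le> real_of_int (walk (y ## \<omega>) (Suc t)))"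
      by (rule Least_Suc[of _ "Suc t"]) (use Suc t not_0 in auto)
    then show ?thesis
      using True Suc by (auto simp: hit_time_eq_Least eSuc_enat simp del: of_int_diff)
  next
    case False
    then have "\<not> (\<exists>t. real_of_int x \<le> real_of_int (walk (y ## \<omega>) t))"
      using Suc not_0 by (metis not0_implies_Suc)
    then show ?thesis using False by (simp add: hit_time_eq_Least del: of_int_diff)
  qed
qed

lemma sets_hit_time_eq [measurable]:
  "{\<omega> \<in> space (stream_space (measure_pmf P)). hit_time u \<omega> = enat n} \<in> sets (stream_space (measure_pmf P))"
  unfolding hit_time_eq_enat_iff by measurable

lemma prob_space_walk_space: "prob_space (walk_space c r \<theta>)"
  unfolding walk_space_def by (intro prob_space.prob_space_stream_space prob_space_measure_pmf)

lemma space_walk_space [simp]: "space (walk_space c r \<theta>) = UNIV"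
  by (simp add: walk_space_def space_stream_space)

lemma sets_walk_space_hit_time_eq:
  "{\<omega> \<in> space (walk_space c r \<theta>). hit_time u \<omega> = enat n} \<in> sets (walk_space c r \<theta>)"
  unfolding walk_space_def by (rule sets_hit_time_eq)

text \<open>\<open>hit_prob c \<theta> n x = P(\<tau>(x) = n)\<close> for \<open>r = 1\<close>, by conditioning on the first step.\<close>

primrec hit_prob :: "nat \<Rightarrow> real \<Rightarrow> nat \<Rightarrow> int \<Rightarrow> real" where
  "hit_prob c \<theta> 0 x = (if x \<le> 0 then 1 else 0)"
| "hit_prob c \<theta> (Suc n) x =
     (if x \<le> 0 then 0 else (1 - \<theta>) * hit_prob c \<theta> n (x - int c) + \<theta> * hit_prob c \<theta> n (x + 1))"

locale bernoulli_walk =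
  fixes c :: nat and \<theta> :: real
  assumes \<theta>_nonneg: "0 \<le> \<theta>" and \<theta>_le_1: "\<theta> \<le> 1"
begin

abbreviation p where "p \<equiv> hit_prob c \<theta>"

lemma hit_prob_nonneg: "0 \<le> p n x"
  by (induction n arbitrary: x) (use \<theta>_nonneg \<theta>_le_1 in auto)

lemma sum_hit_prob_le_1: "(\<Sum>n<N. p n x) \<le> 1"
proof (induction N arbitrary: x)
  case 0
  then show ?case by simp
next
  case (Suc N)
  have split: "(\<Sum>n<Suc N. p n x) = p 0 x + (\<Sum>n<N. p (Suc n) x)"
    by (rule sum.lessThan_Suc_shift)
  show ?case
  proof (cases "x \<le> 0")
    case True
    then show ?thesis unfolding split by simp
  next
    case False
    then have "(\<Sum>n<N. p (Suc n) x)
                 = (1 - \<theta>) * (\<Sum>n<N. p n (x - int c)) + \<theta> * (\<Sum>n<N. p n (x + 1))"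
      by (simp add: sum.distrib sum_distrib_left)
    also have "\<dots> \<le> (1 - \<theta>) * 1 + \<theta> * 1"
      using Suc \<theta>_nonneg \<theta>_le_1 by (intro add_mono mult_left_mono) auto
    finally show ?thesis using False unfolding split by simp
  qed
qed

lemma summable_hit_prob_power:
  assumes "\<bar>z\<bar> \<le> 1"
  shows "summable (\<lambda>n. p n x * z ^ n)"
proof (rule summable_comparison_test)
  show "summable (\<lambda>n. p n x)"
    using sum_hit_prob_le_1 hit_prob_nonneg by (intro summableI_nonneg_bounded)
  show "\<exists>N. \<forall>n\<ge>N. norm (p n x * z ^ n) \<le> p n x"
    using assms hit_prob_nonneg
    by (auto simp: abs_mult power_abs mult_left_le power_le_one)
qed

lemma emeasure_hit_time_eq:
  "emeasure (walk_space c 1 \<theta>) {\<omega>. hit_time (real_of_int x) \<omega> = enat n} = ennreal (p n x)"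
proof (induction n arbitrary: x)
  case 0
  show ?case
  proof (cases "x \<le> 0")
    case True
    then show ?thesis
      using prob_space.emeasure_space_1[OF prob_space_walk_space]
      by (simp add: hit_time_nonpos zero_enat_def[symmetric])
  next
    case False
    then show ?thesis by (simp add: hit_time_eq_enat_iff)
  qed
next
  case (Suc n)
  define N where "N = measure_pmf (step_pmf c 1 \<theta>)"
  define X where "X = {\<omega> \<in> space (stream_space N). hit_time (real_of_int x) \<omega> = enat (Suc n)}"
  show ?case
  proof (cases "x \<le> 0")
    case True
    then show ?thesis by (simp add: hit_time_nonpos zero_enat_def)
  next
    case False
    have "emeasure (walk_space c 1 \<theta>) {\<omega>. hit_time (real_of_int x) \<omega> = enat (Suc n)}
            = emeasure (stream_space N) X"
      by (simp add: X_def N_def walk_space_def space_stream_space)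
    also have "\<dots> = (\<integral>\<^sup>+y. emeasure (stream_space N) {\<omega> \<in> space (stream_space N). y ## \<omega> \<in> X} \<partial>N)"
      by (rule prob_space.emeasure_stream_space) (simp_all add: N_def X_def prob_space_measure_pmf)
    also have "\<dots> = (\<integral>\<^sup>+y. ennreal (p n (x - y)) \<partial>N)"
    proof (intro nn_integral_cong)
      fix y
      have "{\<omega> \<in> space (stream_space N). y ## \<omega> \<in> X} = {\<omega>. hit_time (real_of_int (x - y)) \<omega> = enat n}"
        using False by (auto simp: X_def N_def space_stream_space hit_time_Stream eSuc_enat[symmetric])
      then show "emeasure (stream_space N) {\<omega> \<in> space (stream_space N). y ## \<omega> \<in> X} = ennreal (p n (x - y))"
        using Suc[of "x - y"] by (simp add: N_def walk_space_def del: of_int_diff)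
    qed
    also have "\<dots> = ennreal (p n (x + 1) * \<theta> + p n (x - int c) * (1 - \<theta>))"
      unfolding N_def step_pmf_def using \<theta>_nonneg \<theta>_le_1 hit_prob_nonneg
      by (simp add: ennreal_plus ennreal_mult)
    also have "\<dots> = ennreal (p (Suc n) x)"
      using False by (simp add: algebra_simps)
    finally show ?thesis .
  qed
qed

lemma measure_hit_time_eq:
  "measure (walk_space c 1 \<theta>) {\<omega>. hit_time (real_of_int x) \<omega> = enat n} = p n x"
  using emeasure_hit_time_eq[of x n] hit_prob_nonneg by (simp add: measure_def)

lemma sums_hit_prob:
  "(\<lambda>n. p n x) sums measure (walk_space c 1 \<theta>) {\<omega>. hit_time (real_of_int x) \<omega> < \<infinity>}"
  using finite_measure.sums_measure_enat_finite
      [OF prob_space.finite_measure[OF prob_space_walk_space] sets_walk_space_hit_time_eq,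
       of c 1 \<theta> "real_of_int x"] measure_hit_time_eq
  by simp

lemma integral_hit_time:
  assumes "summable (\<lambda>n. real n * p n x)"
  shows "(\<integral>\<omega>. real (the_enat (hit_time (real_of_int x) \<omega>))
             * indicator {\<omega>. hit_time (real_of_int x) \<omega> < \<infinity>} \<omega> \<partial>walk_space c 1 \<theta>)
           = (\<Sum>n. real n * p n x)"
  using finite_measure.integral_enat_finite
      [OF prob_space.finite_measure[OF prob_space_walk_space] sets_walk_space_hit_time_eq,
       of c 1 \<theta> "real_of_int x"] assms measure_hit_time_eq
  by simp

definition step_pgf :: "real \<Rightarrow> real" where
  "step_pgf y = (1 - \<theta>) * y ^ c + \<theta> / y"

text \<open>A Chernoff-type bound: \<open>step_pgf y\<close> is the mean of \<open>y\<^sup>\<Delta>\<close> over one step, so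
  \<open>step_pgf y ^ n * y powr (-x)\<close> is a supersolution of the recursion defining \<open>hit_prob\<close>.\<close>

lemma hit_prob_le_step_pgf_power:
  assumes "1 \<le> y"
  shows "p n x \<le> step_pgf y ^ n * y powr (- real_of_int x)"
proof (induction n arbitrary: x)
  case 0
  then show ?case using assms by (simp add: ge_one_powr_ge_zero)
next
  case (Suc n)
  show ?case
  proof (cases "x \<le> 0")
    case True
    have "0 \<le> step_pgf y"
      using assms \<theta>_nonneg \<theta>_le_1 by (simp add: step_pgf_def)
    then show ?thesis using True by simp
  next
    case False
    have y_pos: "0 < y" using assms by simp
    have shift_c: "y powr (- real_of_int (x - int c)) = y powr (- real_of_int x) * y ^ c"
      using y_pos by (simp add: powr_add[symmetric] powr_realpow[symmetric])
    have shift_1: "y powr (- real_of_int (x + 1)) = y powr (- real_of_int x) / y"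
      using y_pos by (simp add: powr_diff powr_minus field_simps powr_add)
    have "p (Suc n) x = (1 - \<theta>) * p n (x - int c) + \<theta> * p n (x + 1)"
      using False by simp
    also have "\<dots> \<le> (1 - \<theta>) * (step_pgf y ^ n * y powr (- real_of_int (x - int c)))
                     + \<theta> * (step_pgf y ^ n * y powr (- real_of_int (x + 1)))"
      using \<theta>_nonneg \<theta>_le_1 by (intro add_mono mult_left_mono Suc.IH) auto
    also have "\<dots> = step_pgf y ^ Suc n * y powr (- real_of_int x)"
      unfolding shift_c shift_1 by (simp add: step_pgf_def field_simps)
    finally show ?thesis .
  qed
qed

definition hit_gf :: "int \<Rightarrow> real \<Rightarrow> real" where
  "hit_gf x z = (\<Sum>n. p n x * z ^ n)"

lemma abs_hit_gf_le_1:
  assumes "\<bar>z\<bar> \<le> 1"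
  shows "\<bar>hit_gf x z\<bar> \<le> 1"
proof -
  have summable: "summable (\<lambda>n. norm (p n x * z ^ n))"
    using summable_hit_prob_power[of "\<bar>z\<bar>" x] assms hit_prob_nonneg
    by (simp add: abs_mult power_abs)
  have "\<bar>hit_gf x z\<bar> \<le> (\<Sum>n. norm (p n x * z ^ n))"
    unfolding hit_gf_def using summable_norm[OF summable] by simp
  also have "\<dots> \<le> (\<Sum>n. p n x)"
    using summable summable_hit_prob_power[of 1 x] assms hit_prob_nonneg
    by (intro suminf_le) (auto simp: abs_mult power_abs mult_left_le power_le_one)
  also have "\<dots> \<le> 1"
    using summable_hit_prob_power[of 1 x] sum_hit_prob_le_1 by (intro suminf_le_const) auto
  finally show ?thesis .
qed

lemma hit_gf_nonpos: "x \<le> 0 \<Longrightarrow> hit_gf x z = 1"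
proof -
  assume "x \<le> 0"
  then have "(\<lambda>n. p (Suc n) x * z ^ Suc n) sums 0" by simp
  then have "(\<lambda>n. p n x * z ^ n) sums (0 + p 0 x * z ^ 0)" by (subst (asm) sums_Suc_iff)
  then show ?thesis using \<open>x \<le> 0\<close> by (simp add: hit_gf_def sums_iff)
qed

lemma hit_gf_rec:
  assumes "x > 0" and "\<bar>z\<bar> \<le> 1"
  shows "hit_gf x z = z * ((1 - \<theta>) * hit_gf (x - int c) z + \<theta> * hit_gf (x + 1) z)"
proof -
  have "(\<lambda>n. z * ((1 - \<theta>) * (p n (x - int c) * z ^ n) + \<theta> * (p n (x + 1) * z ^ n)))
          sums (z * ((1 - \<theta>) * hit_gf (x - int c) z + \<theta> * hit_gf (x + 1) z))"
    unfolding hit_gf_def using summable_hit_prob_power[OF assms(2)]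
    by (intro sums_mult sums_add summable_sums)
  moreover have "(\<lambda>n. z * ((1 - \<theta>) * (p n (x - int c) * z ^ n) + \<theta> * (p n (x + 1) * z ^ n)))
                   = (\<lambda>n. p (Suc n) x * z ^ Suc n)"
    using assms(1) by (auto simp: algebra_simps)
  ultimately have "(\<lambda>n. p (Suc n) x * z ^ Suc n)
                     sums (z * ((1 - \<theta>) * hit_gf (x - int c) z + \<theta> * hit_gf (x + 1) z))"
    by simp
  then have "(\<lambda>n. p n x * z ^ n)
      sums (z * ((1 - \<theta>) * hit_gf (x - int c) z + \<theta> * hit_gf (x + 1) z) + p 0 x * z ^ 0)"
    by (subst (asm) sums_Suc_iff)
  then show ?thesis using assms(1) by (simp add: hit_gf_def sums_iff)
qed

lemma summable_hit_gf_power: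
  assumes "\<bar>z\<bar> \<le> 1" and "\<bar>w\<bar> < 1"
  shows "summable (\<lambda>k. hit_gf (f k) z * w ^ k)"
proof (rule summable_comparison_test)
  show "summable (\<lambda>k. \<bar>w\<bar> ^ k)"
    using assms(2) by (intro summable_geometric) auto
  show "\<exists>N. \<forall>k\<ge>N. norm (hit_gf (f k) z * w ^ k) \<le> \<bar>w\<bar> ^ k"
    using abs_hit_gf_le_1[OF assms(1)]
    by (auto intro!: mult_left_le_one_le simp: abs_mult power_abs)
qed

lemma sums_hit_gf_shift:
  assumes "\<bar>z\<bar> \<le> 1" and "\<bar>w\<bar> < 1"
  shows "(\<lambda>j. hit_gf (int j - int c) z * w ^ j)
           sums (w ^ c * (\<Sum>k. hit_gf (int k) z * w ^ k) + (\<Sum>i<c. w ^ i))"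
proof -
  have "(\<lambda>k. hit_gf (int (k + c) - int c) z * w ^ (k + c))
          = (\<lambda>k. w ^ c * (hit_gf (int k) z * w ^ k))"
    by (auto simp: power_add)
  then have "(\<lambda>k. hit_gf (int (k + c) - int c) z * w ^ (k + c))
               sums (w ^ c * (\<Sum>k. hit_gf (int k) z * w ^ k))"
    using summable_hit_gf_power[OF assms] by (simp add: sums_mult summable_sums)
  then have "(\<lambda>j. hit_gf (int j - int c) z * w ^ j)
               sums (w ^ c * (\<Sum>k. hit_gf (int k) z * w ^ k) + (\<Sum>j<c. hit_gf (int j - int c) z * w ^ j))"
    by (subst (asm) sums_iff_shift)
  moreover have "(\<Sum>j<c. hit_gf (int j - int c) z * w ^ j) = (\<Sum>i<c. w ^ i)"
    by (intro sum.cong) (auto simp: hit_gf_nonpos)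
  ultimately show ?thesis by simp
qed

lemma hit_gf_series_identity:
  assumes z: "\<bar>z\<bar> \<le> 1" and w: "w \<noteq> 0" "\<bar>w\<bar> < 1"
  shows "((\<Sum>k. hit_gf (int k) z * w ^ k) - 1) * (1 - \<theta> * z / w - w ^ c * z * (1 - \<theta>))
           = (1 - \<theta>) * z * ((w - w ^ (c + 1)) / (1 - w)) - \<theta> * z * hit_gf 1 z"
proof -
  define b where "b k = hit_gf (int k) z" for k
  define s where "s j = hit_gf (int j - int c) z * w ^ j" for j
  define P where "P = (\<Sum>k. b k * w ^ k)"
  have P: "(\<lambda>k. b k * w ^ k) sums P"
    unfolding P_def b_def using summable_hit_gf_power[OF z w(2)] by (rule summable_sums)
  have b_0: "b 0 = 1" and s_0: "s 0 = 1"
    by (simp_all add: b_def s_def hit_gf_nonpos)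
  have P_1: "(\<lambda>k. b (k + 1) * w ^ (k + 1)) sums (P - 1)"
    using sums_iff_shift[of "\<lambda>k. b k * w ^ k" 1 "P - 1"] P b_0 by simp
  have P_2: "(\<lambda>k. b (k + 2) * w ^ (k + 2)) sums (P - 1 - b 1 * w)"
    using sums_iff_shift[of "\<lambda>k. b k * w ^ k" 2 "P - 1 - b 1 * w"] P b_0
    by (simp add: numeral_2_eq_2)
  have "s sums (w ^ c * P + (\<Sum>i<c. w ^ i))"
    using sums_hit_gf_shift[OF z w(2)] by (simp add: s_def[abs_def] P_def b_def)
  then have S_1: "(\<lambda>k. s (k + 1)) sums (w ^ c * P + (\<Sum>i<c. w ^ i) - 1)"
    using sums_iff_shift[of s 1 "w ^ c * P + (\<Sum>i<c. w ^ i) - 1"] s_0 by simp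
  have step: "b (k + 1) * w ^ (k + 1)
                = z * (1 - \<theta>) * s (k + 1) + (z * \<theta> / w) * (b (k + 2) * w ^ (k + 2))" for k
  proof -
    have rec: "b (k + 1) = z * ((1 - \<theta>) * hit_gf (int (k + 1) - int c) z + \<theta> * b (k + 2))"
      unfolding b_def using hit_gf_rec[of "int (k + 1)" z] z by (simp add: add_ac)
    have "(z * \<theta> / w) * (b (k + 2) * w ^ (k + 2)) = z * \<theta> * b (k + 2) * w ^ (k + 1)"
      using w(1) by (simp add: field_simps)
    moreover have "z * (1 - \<theta>) * s (k + 1) + z * \<theta> * b (k + 2) * w ^ (k + 1)
        = w ^ (k + 1) * (z * ((1 - \<theta>) * hit_gf (int (k + 1) - int c) z + \<theta> * b (k + 2)))"
      by (simp add: s_def algebra_simps)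
    ultimately show ?thesis
      using rec by simp
  qed
  have "(\<lambda>k. b (k + 1) * w ^ (k + 1))
          sums (z * (1 - \<theta>) * (w ^ c * P + (\<Sum>i<c. w ^ i) - 1) + (z * \<theta> / w) * (P - 1 - b 1 * w))"
    unfolding step by (intro sums_add sums_mult S_1 P_2)
  then have "P - 1 = z * (1 - \<theta>) * (w ^ c * P + (\<Sum>i<c. w ^ i) - 1) + (z * \<theta> / w) * (P - 1 - b 1 * w)"
    using P_1 sums_unique2 by blast
  moreover have "(\<Sum>i<c. w ^ i) = (1 - w ^ c) / (1 - w)"
    using w(2) by (simp add: sum_gp_strict)
  ultimately show ?thesis
    using w by (simp add: P_def b_def field_simps)
qed

lemma sums_hit_gf_series_tail:
  assumes "\<bar>z\<bar> \<le> 1" and "\<bar>w\<bar> < 1"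
  shows "(\<lambda>k. (if k = 0 then 0 else hit_gf (int k) z) * w ^ k)
           sums ((\<Sum>k. hit_gf (int k) z * w ^ k) - 1)"
proof -
  have "(\<lambda>k. hit_gf (int k) z * w ^ k) sums (\<Sum>k. hit_gf (int k) z * w ^ k)"
    using summable_hit_gf_power[OF assms] by (rule summable_sums)
  then have "(\<lambda>k. hit_gf (int (k + 1)) z * w ^ (k + 1)) sums ((\<Sum>k. hit_gf (int k) z * w ^ k) - 1)"
    using sums_iff_shift[of "\<lambda>k. hit_gf (int k) z * w ^ k" 1] by (simp add: hit_gf_nonpos)
  then show ?thesis
    using sums_iff_shift[of "\<lambda>k. (if k = 0 then 0 else hit_gf (int k) z) * w ^ k" 1] by simp
qed

end

locale drifting_walk = bernoulli_walk +
  assumes c_pos: "0 < c" and drift: "real c * (1 - \<theta>) < \<theta>"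
begin

lemma one_minus_\<theta>_less_\<theta>: "1 - \<theta> < \<theta>"
proof -
  have "1 - \<theta> \<le> real c * (1 - \<theta>)"
    using c_pos \<theta>_le_1 mult_right_mono[of 1 "real c" "1 - \<theta>"] by simp
  then show ?thesis using drift by linarith
qed

lemma \<theta>_pos: "0 < \<theta>"
  using one_minus_\<theta>_less_\<theta> \<theta>_le_1 by linarith

lemma step_pgf_strict_antimono:
  assumes "0 < a" "a < b" "b \<le> 1"
  shows "step_pgf b < step_pgf a"
proof -
  have "(1 - \<theta>) * (b ^ c - a ^ c) \<le> (1 - \<theta>) * (real c * (b - a))"
    using assms \<theta>_le_1 by (intro mult_left_mono power_diff_le_of_le_one) auto
  also have "\<dots> = (real c * (1 - \<theta>)) * (b - a)"
    by simp
  also have "\<dots> < \<theta> * (b - a)"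
    using drift assms by (intro mult_strict_right_mono) auto
  also have "\<dots> \<le> \<theta> * (b - a) / (a * b)"
    using assms \<theta>_pos by (simp add: le_divide_eq mult_le_one)
  also have "\<dots> = \<theta> / a - \<theta> / b"
    using assms by (simp add: field_simps)
  finally show ?thesis
    by (simp add: step_pgf_def algebra_simps)
qed

lemma exists_step_pgf_less_1: "\<exists>y > 1. step_pgf y < 1"
proof -
  have "(step_pgf has_real_derivative (real c * (1 - \<theta>) - \<theta>)) (at 1)"
    unfolding step_pgf_def by (auto intro!: derivative_eq_intros)
  then obtain d where "d > 0" and "\<And>h. 0 < h \<Longrightarrow> h < d \<Longrightarrow> step_pgf (1 + h) < step_pgf 1"
    using DERIV_neg_dec_right drift by (metis diff_less_0_iff_less)
  then have "step_pgf (1 + d / 2) < 1"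
    by (simp add: step_pgf_def)
  then show ?thesis
    using \<open>d > 0\<close> by (intro exI[of _ "1 + d / 2"]) auto
qed

lemma summable_hit_prob_beyond_1: "\<exists>R > 1. \<forall>x. summable (\<lambda>n. p n x * R ^ n)"
proof -
  obtain y where y: "y > 1" "step_pgf y < 1"
    using exists_step_pgf_less_1 by blast
  define m where "m = step_pgf y"
  have "0 < m"
    unfolding m_def step_pgf_def using y \<theta>_pos \<theta>_le_1 by (intro add_nonneg_pos) auto
  define R where "R = (1 + 1 / m) / 2"
  have "R > 1" "R * m < 1"
    using \<open>0 < m\<close> y by (auto simp: R_def m_def field_simps)
  have "summable (\<lambda>n. p n x * R ^ n)" for x
  proof (rule summable_comparison_test)
    show "summable (\<lambda>n. y powr (- real_of_int x) * (R * m) ^ n)"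
      using \<open>R * m < 1\<close> \<open>R > 1\<close> \<open>0 < m\<close> by (intro summable_mult summable_geometric) auto
    have "norm (p n x * R ^ n) \<le> y powr (- real_of_int x) * (R * m) ^ n" for n
    proof -
      have "norm (p n x * R ^ n) = p n x * R ^ n"
        using hit_prob_nonneg \<open>R > 1\<close> by simp
      also have "\<dots> \<le> m ^ n * y powr (- real_of_int x) * R ^ n"
        using hit_prob_le_step_pgf_power[of y n x] y \<open>R > 1\<close>
        by (intro mult_right_mono) (auto simp: m_def)
      finally show ?thesis
        by (simp add: power_mult_distrib mult_ac)
    qed
    then show "\<exists>N. \<forall>n\<ge>N. norm (p n x * R ^ n) \<le> y powr (- real_of_int x) * (R * m) ^ n"
      by blast
  qed
  then show ?thesis
    using \<open>R > 1\<close> by blast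
qed

lemma summable_real_mult_hit_prob: "summable (\<lambda>n. real n * p n x)"
  using summable_hit_prob_beyond_1 sums_diffs_at_1 sums_summable by metis

lemma root_eq_iff_step_pgf:
  assumes "0 < w" "0 < z"
  shows "w ^ (c + 1) * (1 - \<theta>) * z + \<theta> * z = w \<longleftrightarrow> step_pgf w = 1 / z"
  using assms by (auto simp: step_pgf_def field_simps)

lemma root_pos:
  assumes z: "0 < z" "z < 1" and w: "-1 < w" "w < 1" "w ^ (c + 1) * (1 - \<theta>) * z + \<theta> * z = w"
  shows "0 < w"
proof (rule ccontr)
  assume "\<not> 0 < w"
  have "\<bar>w\<bar> ^ (c + 1) \<le> 1"
    using w by (intro power_le_one) auto
  then have "\<bar>w ^ (c + 1)\<bar> \<le> 1"
    by (simp only: power_abs)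
  then have "-1 \<le> w ^ (c + 1)"
    by linarith
  then have "-1 * ((1 - \<theta>) * z) \<le> w ^ (c + 1) * ((1 - \<theta>) * z)"
    using z \<theta>_le_1 by (intro mult_right_mono) auto
  moreover have "0 < z * (2 * \<theta> - 1)"
    using z one_minus_\<theta>_less_\<theta> by simp
  ultimately show False
    using w \<open>\<not> 0 < w\<close> by (simp add: algebra_simps)
qed

lemma w_root:
  assumes z: "0 < z" "z < 1"
  shows "0 < w_root c \<theta> z" "w_root c \<theta> z < 1"
    and "w_root c \<theta> z ^ (c + 1) * (1 - \<theta>) * z + \<theta> * z = w_root c \<theta> z"
proof -
  define g where "g w = w ^ (c + 1) * (1 - \<theta>) * z + \<theta> * z - w" for w :: real
  have "\<exists>x \<ge> 0. x \<le> 1 \<and> g x = 0"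
    by (rule IVT2) (use z \<theta>_pos in \<open>auto simp: g_def algebra_simps intro!: continuous_intros\<close>)
  then obtain x where x: "0 \<le> x" "x \<le> 1" "g x = 0"
    by blast
  then have root: "x ^ (c + 1) * (1 - \<theta>) * z + \<theta> * z = x"
    by (simp add: g_def)
  have "x \<noteq> 1"
    using root z by (auto simp: algebra_simps)
  then have x_root: "-1 < x \<and> x < 1 \<and> x ^ (c + 1) * (1 - \<theta>) * z + \<theta> * z = x"
    using x root by auto
  have x_pos: "0 < x"
    using root_pos z x_root by blast
  have unique: "y = x" if y: "-1 < y \<and> y < 1 \<and> y ^ (c + 1) * (1 - \<theta>) * z + \<theta> * z = y" for y
  proof -
    have "0 < y"
      using root_pos z y by blast
    then have "step_pgf y = step_pgf x"
      using root_eq_iff_step_pgf z x_pos x_root y by simp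
    then show ?thesis
      using step_pgf_strict_antimono \<open>0 < y\<close> x_pos x_root y
      by (metis linorder_neqE_linordered_idom less_le order_less_irrefl)
  qed
  have "w_root c \<theta> z = x"
    unfolding w_root_def using x_root unique by (rule the_equality)
  then show "0 < w_root c \<theta> z" "w_root c \<theta> z < 1"
    and "w_root c \<theta> z ^ (c + 1) * (1 - \<theta>) * z + \<theta> * z = w_root c \<theta> z"
    using x_root x_pos by auto
qed

lemma phibar_eq_hit_gf:
  assumes z: "0 < z" "z < 1"
  shows "phibar c \<theta> z = \<theta> * z * hit_gf 1 z"
proof -
  define w where "w = w_root c \<theta> z"
  have w: "0 < w" "w < 1" "w ^ (c + 1) * (1 - \<theta>) * z + \<theta> * z = w"
    using w_root[OF z] by (simp_all add: w_def)
  have "1 - \<theta> * z / w - w ^ c * z * (1 - \<theta>) = 0"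
    using w by (simp add: field_simps)
  then have "(1 - \<theta>) * z * ((w - w ^ (c + 1)) / (1 - w)) = \<theta> * z * hit_gf 1 z"
    using hit_gf_series_identity[of z w] z w by simp
  moreover have "(1 - \<theta>) * z * w + \<theta> * z - w = (1 - \<theta>) * z * (w - w ^ (c + 1))"
    using w(3) by (simp add: algebra_simps)
  ultimately show ?thesis
    by (simp add: phibar_def w_def [symmetric])
qed

lemma Phi_denominator_nonzero:
  assumes z: "0 < z" "z < 1" and w: "w \<noteq> 0" "\<bar>w\<bar> < \<theta> * z / 2"
  shows "1 - \<theta> * z / w - w ^ c * z * (1 - \<theta>) \<noteq> 0"
proof -
  define a where "a = w ^ (c + 1) * (z * (1 - \<theta>))"
  have "\<theta> * z \<le> 1"
    using z \<theta>_le_1 by (simp add: mult_le_one)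
  then have "\<bar>w\<bar> ^ c \<le> 1"
    using w by (intro power_le_one) auto
  then have "\<bar>w\<bar> ^ (c + 1) \<le> \<bar>w\<bar>"
    by (simp add: mult_left_le)
  moreover have "\<bar>z * (1 - \<theta>)\<bar> \<le> 1"
    using z \<theta>_pos \<theta>_le_1 by (simp add: abs_mult mult_le_one)
  ultimately have "\<bar>w\<bar> ^ (c + 1) * \<bar>z * (1 - \<theta>)\<bar> \<le> \<bar>w\<bar> * 1"
    by (intro mult_mono) auto
  then have "\<bar>a\<bar> \<le> \<bar>w\<bar>"
    by (simp add: a_def abs_mult power_abs)
  define D where "D = 1 - \<theta> * z / w - w ^ c * z * (1 - \<theta>)"
  have "w * D = w - \<theta> * z - a"
    using w by (simp add: D_def a_def field_simps)
  then have "w * D < 0"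
    using \<open>\<bar>a\<bar> \<le> \<bar>w\<bar>\<close> w abs_ge_self[of w] abs_ge_minus_self[of a] by linarith
  then show ?thesis
    unfolding D_def[symmetric] by auto
qed

lemma Phi_eq_hit_gf_series:
  assumes z: "0 < z" "z < 1" and w: "\<bar>w\<bar> < \<theta> * z / 2"
  shows "Phi c \<theta> w z = (\<Sum>k. (if k = 0 then 0 else hit_gf (int k) z) * w ^ k)"
proof (cases "w = 0")
  case True
  then show ?thesis by (simp add: Phi_def)
next
  case False
  define D where "D = 1 - \<theta> * z / w - w ^ c * z * (1 - \<theta>)"
  have "D \<noteq> 0"
    unfolding D_def using Phi_denominator_nonzero[OF z False w] .
  have "\<theta> * z \<le> 1"
    using z \<theta>_le_1 by (simp add: mult_le_one)
  then have w_1: "\<bar>w\<bar> < 1"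
    using w by linarith
  have "((\<Sum>k. hit_gf (int k) z * w ^ k) - 1) * D
          = (1 - \<theta>) * z * ((w - w ^ (c + 1)) / (1 - w)) - phibar c \<theta> z"
    using hit_gf_series_identity[of z w] phibar_eq_hit_gf[OF z] z w_1 False
    by (simp add: D_def)
  then have "(\<Sum>k. hit_gf (int k) z * w ^ k) - 1
          = ((1 - \<theta>) * z * ((w - w ^ (c + 1)) / (1 - w)) - phibar c \<theta> z) / D"
    using \<open>D \<noteq> 0\<close> by (simp add: eq_divide_eq)
  then show ?thesis
    using sums_hit_gf_series_tail[of z w] z w_1 False by (simp add: Phi_def D_def sums_iff)
qed

lemma phi_eq_hit_gf:
  assumes z: "0 < z" "z < 1" and "1 \<le> u"
  shows "phi c \<theta> z u = hit_gf (int u) z"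
proof -
  define h where "h k = (if k = 0 then 0 else hit_gf (int k) z)" for k
  have "eventually (\<lambda>w. \<bar>w\<bar> < \<theta> * z / 2) (nhds 0)"
    unfolding eventually_nhds_metric using z \<theta>_pos
    by (intro exI[of _ "\<theta> * z / 2"]) (auto simp: dist_real_def)
  then have "eventually (\<lambda>w. Phi c \<theta> w z = (\<Sum>k. h k * w ^ k)) (nhds 0)"
    by (rule eventually_mono) (simp add: Phi_eq_hit_gf_series[OF z] h_def)
  then have "(deriv ^^ u) (\<lambda>w. Phi c \<theta> w z) 0 = (deriv ^^ u) (\<lambda>w. \<Sum>k. h k * w ^ k) 0"
    by (rule higher_deriv_cong_ev) simp
  also have "\<dots> = fact u * h u"
    using sums_hit_gf_series_tail[of z] z unfolding h_def
    by (intro higher_deriv_powser_0[where r = 1]) (auto intro: sums_summable)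
  finally show ?thesis
    using \<open>1 \<le> u\<close> by (simp add: phi_def h_def)
qed

lemma phi_tendsto_at_left_1:
  assumes "1 \<le> u"
  shows "((\<lambda>z. phi c \<theta> z u) \<longlongrightarrow> (\<Sum>n. p n (int u))) (at_left 1)"
    and "(deriv (\<lambda>z. phi c \<theta> z u) \<longlongrightarrow> (\<Sum>n. real n * p n (int u))) (at_left 1)"
proof -
  obtain R where "R > 1" and "summable (\<lambda>n. p n (int u) * R ^ n)"
    using summable_hit_prob_beyond_1 by blast
  moreover have "phi c \<theta> z u = (\<Sum>n. p n (int u) * z ^ n)" if "z \<in> {0<..<1}" for z
    using phi_eq_hit_gf[of z u] that assms by (simp add: hit_gf_def)
  ultimately show "((\<lambda>z. phi c \<theta> z u) \<longlongrightarrow> (\<Sum>n. p n (int u))) (at_left 1)"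
    and "(deriv (\<lambda>z. phi c \<theta> z u) \<longlongrightarrow> (\<Sum>n. real n * p n (int u))) (at_left 1)"
    using powser_tendsto_at_left_1[of "\<lambda>n. p n (int u)" R "\<lambda>z. phi c \<theta> z u"] by auto
qed

end

theorem lemma3p6:
  fixes c u :: nat and \<theta> :: real
  assumes "0 < c" and "real c / real (c+1) < \<theta>" and "\<theta> < 1" and "1 \<le> u"
  shows "\<exists>A B. ((\<lambda>z. phi c \<theta> z u) \<longlongrightarrow> A) (at_left 1)
            \<and> ((\<lambda>z. deriv (\<lambda>y. phi c \<theta> y u) z) \<longlongrightarrow> B) (at_left 1)
            \<and> (let M = walk_space c 1 \<theta>; F = {\<omega> \<in> space M. hit_time (real u) \<omega> < \<infinity>}
               in (\<integral>\<omega>. real (the_enat (hit_time (real u) \<omega>)) * indicator F \<omega> \<partial>M) / measure M F = B / A)"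
proof -
  have "real c * (1 - \<theta>) < \<theta>"
    using assms(2) by (simp add: field_simps)
  moreover have "0 \<le> \<theta>"
    using assms(2) divide_nonneg_nonneg[of "real c" "real (c + 1)"] by linarith
  ultimately interpret drifting_walk c \<theta>
    using assms by unfold_locales auto
  have "measure (walk_space c 1 \<theta>) {\<omega>. hit_time (real u) \<omega> < \<infinity>} = (\<Sum>n. p n (int u))"
    using sums_hit_prob[of "int u"] by (simp add: sums_iff)
  moreover have "(\<integral>\<omega>. real (the_enat (hit_time (real u) \<omega>))
                   * indicator {\<omega>. hit_time (real u) \<omega> < \<infinity>} \<omega> \<partial>walk_space c 1 \<theta>)
                 = (\<Sum>n. real n * p n (int u))"
    using integral_hit_time[OF summable_real_mult_hit_prob, of "int u"] by simp
  ultimately show ?thesis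
    using phi_tendsto_at_left_1[OF assms(4)] by (auto simp: Let_def)
qed

end
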